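(* Consider the following cooperative multi-player multi-armed bandit problem ("Problem A"). There are $M$ players $P_1,\dots,P_M$; player $P_i$ has a finite set $\mathcal{K}_i=\{1,\dots,K_i\}$ of arms. At each round $t=1,2,\dots,T$ each player $P_i$ picks an arm $a_i(t)\in\mathcal{K}_i$, giving the arm-tuple $a(t)=(a_1(t),\dots,a_M(t))\in\mathcal{K}_1\times\cdots\times\mathcal{K}_M$. For each arm-tuple $a$ there is an unknown $1$-subgaussian distribution $F_a$ supported in $[0,1]$ with mean $\mu_a$; when $a(t)$ is played, a reward $X_{a(t)}(t)\sim F_{a(t)}$ is drawn, independently across rounds, and this same (common) reward is observed by all players. No player observes the arms chosen by the other players, and players cannot communicate during play (they may agree on a protocol beforehand). Let $\mu^*=\max_a\mu_a$, $\Delta_a=\mu^*-\mu_a$, and define the expected regret $R_T=\mathbb{E}\big[T\mu^*-\sum_{t=1}^T X_{a(t)}(t)\big]$. Suppose every player runs the \texttt{mUCB} algorithm: in the first $K_{\max}=K_1\cdots K_M$ rounds, player $P_i$ starts at its arm $1$ and successively pulls each of its arms $K_{i+1}\cdots K_M$ consecutive times before moving to its next arm, repeating this whole epoch $K_1\cdots K_{i-1}$ times (so that every arm-tuple is played exactly once, and every player knows which tuple produced each reward). For $t>K_{\max}$, every player computes for each arm-tuple $a$ the index $$\eta_a(t)=\begin{cases}\infty,& n_a(t)=0,\\ \hat\mu_a(t)+\sqrt{\dfrac{2\log(1/\delta)}{n_a(t)}},&\text{otherwise},\end{cases}$$ where $n_a(t)$ is the number of rounds among the first $t$ in which tuple $a$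 was played, $\hat\mu_a(t)$ is the average of the rewards received from tuple $a$ in those rounds, and $\delta=1/t^2$; player $P_i$ then plays the $i$-th component of a tuple maximizing $\eta_a(t)$, where ties between maximizing tuples are broken in favour of the lexicographically smallest tuple (i.e. $(x_1,\dots,x_M)<(y_1,\dots,y_M)$ iff there is $n$ with $x_j=y_j$ for all $j<n$ and $x_n<y_n$). Then the expected regret satisfies $$R_T\le 3\sum_a\Delta_a+\sum_{a:\,\Delta_a>0}\frac{(6+4\sqrt2)\log T}{\Delta_a}.$$
   Context: Arms-tuples $a$ range over $\mathcal{K}_1\times\cdots\times\mathcal{K}_M$. Because all players see the same rewards and follow the same deterministic rule, each can compute the tuple chosen at every round even though actions of others are not observed. *)

theory Defs
  imports "HOL-Probability.Probability"
begin

text \<open>Players are indexed 0..M-1 (paper: P_1..P_M); player i has arms {1..K i}.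
  Arm tuples are lists of length M.\<close>

definition arm_tuples :: "nat \<Rightarrow> (nat \<Rightarrow> nat) \<Rightarrow> nat list set" where
  "arm_tuples M K = {a. length a = M \<and> (\<forall>i<M. 1 \<le> a ! i \<and> a ! i \<le> K i)}"

definition Kmax :: "nat \<Rightarrow> (nat \<Rightarrow> nat) \<Rightarrow> nat" where
  "Kmax M K = (\<Prod>i<M. K i)"

definition lex_less :: "nat \<Rightarrow> nat list \<Rightarrow> nat list \<Rightarrow> bool" where
  "lex_less M x y = (\<exists>n<M. (\<forall>j<n. x ! j = y ! j) \<and> x ! n < y ! n)"

text \<open>Initial phase: arm of player i at round t (1-based, t \<le> Kmax): player i
  pulls each of its arms K_(i+1)...K_M consecutive times, starting from arm 1,
  and repeats this epoch.\<close>
definition init_arm :: "nat \<Rightarrow> (nat \<Rightarrow> nat) \<Rightarrow> nat \<Rightarrow> nat \<Rightarrow> nat" where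
  "init_arm M K i t = ((t - 1) div (\<Prod>j\<in>{i<..<M}. K j)) mod K i + 1"

definition n_count :: "(nat list \<times> real) list \<Rightarrow> nat list \<Rightarrow> nat" where
  "n_count h a = length (filter (\<lambda>p. fst p = a) h)"

definition mu_hat :: "(nat list \<times> real) list \<Rightarrow> nat list \<Rightarrow> real" where
  "mu_hat h a = sum_list (map snd (filter (\<lambda>p. fst p = a) h)) / real (n_count h a)"

definition ucb_index :: "(nat list \<times> real) list \<Rightarrow> nat list \<Rightarrow> ereal" where
  "ucb_index h a =
     (let t = length h; \<delta> = 1 / (real t)^2 in
      if n_count h a = 0 then \<infinity>
      else ereal (mu_hat h a + sqrt (2 * ln (1 / \<delta>) / real (n_count h a))))"

text \<open>Joint choice for the next round t+1, given the history of the first t rounds: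
  the initial round-robin while t < Kmax, afterwards the lexicographically
  smallest maximiser of the UCB index.\<close>
definition mucb_choice :: "nat \<Rightarrow> (nat \<Rightarrow> nat) \<Rightarrow> (nat list \<times> real) list \<Rightarrow> nat list" where
  "mucb_choice M K h =
     (let t = length h in
      if t < Kmax M K then map (\<lambda>i. init_arm M K i (t + 1)) [0..<M]
      else (THE a. a \<in> arm_tuples M K
               \<and> ucb_index h a = Max (ucb_index h ` arm_tuples M K)
               \<and> (\<forall>b\<in>arm_tuples M K. ucb_index h b = Max (ucb_index h ` arm_tuples M K)
                      \<longrightarrow> a = b \<or> lex_less M a b)))"

text \<open>Reconstruction (by each player) of the tuples played in rounds 1..s from the
  observed common rewards rs (the reward of round s+1 is rs ! s).\<close>
primrec tuples_of :: "nat \<Rightarrow> (nat \<Rightarrow> nat) \<Rightarrow> nat \<Rightarrow> real list \<Rightarrow> nat list list" where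
  "tuples_of M K 0 rs = []"
| "tuples_of M K (Suc s) rs =
     tuples_of M K s rs @ [mucb_choice M K (zip (tuples_of M K s rs) (take s rs))]"

text \<open>Arm played by player i in the next round, given only the list rs of common
  rewards observed so far.\<close>
definition player_arm :: "nat \<Rightarrow> (nat \<Rightarrow> nat) \<Rightarrow> nat \<Rightarrow> real list \<Rightarrow> nat" where
  "player_arm M K i rs = mucb_choice M K (zip (tuples_of M K (length rs) rs) rs) ! i"

text \<open>Realised play: rewards X a t \<omega> for tuple a at round t (t \<ge> 1).
  rewards_upto t = list of common rewards in rounds 1..t;
  played t = tuple formed by the players' arms at round t.\<close>
primrec rewards_upto ::
  "nat \<Rightarrow> (nat \<Rightarrow> nat) \<Rightarrow> (nat list \<Rightarrow> nat \<Rightarrow> 'w \<Rightarrow> real) \<Rightarrow> 'w \<Rightarrow> nat \<Rightarrow> real list" where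
  "rewards_upto M K X \<omega> 0 = []"
| "rewards_upto M K X \<omega> (Suc t) =
     (let rs = rewards_upto M K X \<omega> t
      in rs @ [X (map (\<lambda>i. player_arm M K i rs) [0..<M]) (Suc t) \<omega>])"

definition played ::
  "nat \<Rightarrow> (nat \<Rightarrow> nat) \<Rightarrow> (nat list \<Rightarrow> nat \<Rightarrow> 'w \<Rightarrow> real) \<Rightarrow> 'w \<Rightarrow> nat \<Rightarrow> nat list" where
  "played M K X \<omega> t = map (\<lambda>i. player_arm M K i (rewards_upto M K X \<omega> (t - 1))) [0..<M]"

definition subgaussian :: "real \<Rightarrow> real measure \<Rightarrow> bool" where
  "subgaussian \<sigma> F =
     (\<forall>l::real. integrable F (\<lambda>x. exp (l * (x - integral\<^sup>L F (\<lambda>x. x))))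
       \<and> integral\<^sup>L F (\<lambda>x. exp (l * (x - integral\<^sup>L F (\<lambda>x. x)))) \<le> exp (l^2 * \<sigma>^2 / 2))"

end

theory Submission
  imports Defs
begin

text \<open>If a tuple b with gap \<Delta> is chosen after
  u = (6 + 4 sqrt 2) ln T / \<Delta>^2 pulls, then either the index of an optimal tuple a has dropped
  to at most its mean, or the index of b still exceeds that mean. Hence n_T(b) \<le> u + 1 + (number
  of such bad rounds). Both bad events are bounded by Chernoff's method for
  exp (l (S_t - \<mu> n_t) - l^2 n_t / 8), a nonnegative supermartingale by Hoeffding's lemma and the
  independence of each round from the past, combined with a union bound over the value of n_t.
  This gives probabilities at most t^-7 and T^-3, so the expected number of bad rounds is at
  most 2. Finally, the regret is the sum over b of \<Delta>_b E n_T(b), since the tuple played in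
  round t is independent of the rewards of round t.\<close>

section \<open>Lexicographic tie-breaking\<close>

lemma lex_less_irrefl: "\<not> lex_less M x x"
  by (auto simp: lex_less_def)

lemma lex_less_asym: "lex_less M x y \<Longrightarrow> \<not> lex_less M y x"
  unfolding lex_less_def by (metis less_asym' linorder_neqE_nat)

lemma lex_less_trans: "lex_less M x y \<Longrightarrow> lex_less M y z \<Longrightarrow> lex_less M x z"
  unfolding lex_less_def by (metis dual_order.strict_trans linorder_neqE_nat)

lemma lex_less_total:
  assumes "length x = M" "length y = M" "x \<noteq> y"
  shows "lex_less M x y \<or> lex_less M y x"
proof -
  have "\<exists>j<M. x ! j \<noteq> y ! j"
    using assms nth_equalityI by metis
  then obtain n where "n < M" "x ! n \<noteq> y ! n" "\<forall>j<n. x ! j = y ! j"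
    using exists_least_iff[of "\<lambda>j. j < M \<and> x ! j \<noteq> y ! j"] by (metis less_trans)
  then show ?thesis
    unfolding lex_less_def by (metis linorder_neqE_nat)
qed

lemma finite_has_lex_least:
  assumes "finite S" "S \<noteq> {}" "\<forall>a\<in>S. length a = M"
  shows "\<exists>a\<in>S. \<forall>b\<in>S. a = b \<or> lex_less M a b"
  using assms
proof (induction S rule: finite_ne_induct)
  case (singleton x)
  then show ?case by auto
next
  case (insert x S)
  then obtain a where a: "a \<in> S" "\<forall>b\<in>S. a = b \<or> lex_less M a b" by auto
  show ?case
  proof (cases "lex_less M x a")
    case True
    have "x = b \<or> lex_less M x b" if "b \<in> insert x S" for b
      using that a True lex_less_trans[of M x a b] by auto
    then show ?thesis by blast
  next
    case False
    then have "x = a \<or> lex_less M a x" using lex_less_total[of a M x] a insert.prems by auto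
    then show ?thesis using a by auto
  qed
qed

definition lex_argmax :: "nat \<Rightarrow> nat list set \<Rightarrow> (nat list \<Rightarrow> 'a::linorder) \<Rightarrow> nat list" where
  "lex_argmax M S f = (THE a. a \<in> S \<and> f a = Max (f ` S)
                         \<and> (\<forall>b\<in>S. f b = Max (f ` S) \<longrightarrow> a = b \<or> lex_less M a b))"

lemma ex1_lex_argmax:
  assumes S: "finite S" "S \<noteq> {}" "\<forall>a\<in>S. length a = M"
  shows "\<exists>!a. a \<in> S \<and> f a = Max (f ` S) \<and> (\<forall>b\<in>S. f b = Max (f ` S) \<longrightarrow> a = b \<or> lex_less M a b)"
proof -
  let ?m = "Max (f ` S)"
  have "?m \<in> f ` S"
    using S by (intro Max_in) auto
  then have "{a\<in>S. f a = ?m} \<noteq> {}"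
    by auto
  then obtain a where a: "a \<in> S" "f a = ?m" and least: "\<forall>b\<in>{a\<in>S. f a = ?m}. a = b \<or> lex_less M a b"
    using finite_has_lex_least[of "{a\<in>S. f a = ?m}" M] S by auto
  show ?thesis
  proof (rule ex1I)
    show "a \<in> S \<and> f a = ?m \<and> (\<forall>b\<in>S. f b = ?m \<longrightarrow> a = b \<or> lex_less M a b)"
      using a least by auto
  next
    fix y assume y: "y \<in> S \<and> f y = ?m \<and> (\<forall>b\<in>S. f b = ?m \<longrightarrow> y = b \<or> lex_less M y b)"
    then have "y = a \<or> lex_less M y a" and "a = y \<or> lex_less M a y"
      using a least by auto
    then show "y = a" using lex_less_asym by metis
  qed
qed

lemma lex_argmax_in:
  assumes "finite S" "S \<noteq> {}" "\<forall>a\<in>S. length a = M"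
  shows "lex_argmax M S f \<in> S"
  using theI'[OF ex1_lex_argmax[OF assms]] unfolding lex_argmax_def by (rule conjunct1)

lemma lex_argmax_eq_iff_least_maximiser:
  assumes S: "finite S" "\<forall>a\<in>S. length a = M" and b: "b \<in> S"
  shows "lex_argmax M S f = b \<longleftrightarrow>
           f b = Max (f ` S) \<and> (\<forall>c\<in>S. f c = Max (f ` S) \<longrightarrow> b = c \<or> lex_less M b c)"
proof -
  have ex1: "\<exists>!a. a \<in> S \<and> f a = Max (f ` S) \<and> (\<forall>b\<in>S. f b = Max (f ` S) \<longrightarrow> a = b \<or> lex_less M a b)"
    using ex1_lex_argmax[OF S(1) _ S(2)] b by blast
  show ?thesis
  proof
    assume "lex_argmax M S f = b"
    then show "f b = Max (f ` S) \<and> (\<forall>c\<in>S. f c = Max (f ` S) \<longrightarrow> b = c \<or> lex_less M b c)"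
      using theI'[OF ex1] unfolding lex_argmax_def by simp
  next
    assume "f b = Max (f ` S) \<and> (\<forall>c\<in>S. f c = Max (f ` S) \<longrightarrow> b = c \<or> lex_less M b c)"
    then show "lex_argmax M S f = b"
      unfolding lex_argmax_def using b by (intro the1_equality[OF ex1]) simp
  qed
qed

lemma lex_argmax_eq_iff:
  assumes S: "finite S" "\<forall>a\<in>S. length a = M" and b: "b \<in> S"
  shows "lex_argmax M S f = b \<longleftrightarrow> (\<forall>c\<in>S. f c \<le> f b) \<and> (\<forall>c\<in>S. lex_less M c b \<longrightarrow> f c < f b)"
  unfolding lex_argmax_eq_iff_least_maximiser[OF assms]
proof
  let ?m = "Max (f ` S)"
  have le_m: "f c \<le> ?m" if "c \<in> S" for c
    using S(1) that by simp
  {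
    assume fb: "f b = ?m \<and> (\<forall>c\<in>S. f c = ?m \<longrightarrow> b = c \<or> lex_less M b c)"
    have "f c < f b" if "c \<in> S" "lex_less M c b" for c
    proof -
      have "f c \<noteq> ?m"
        using fb that lex_less_irrefl lex_less_asym by metis
      then show ?thesis using le_m[OF that(1)] fb by simp
    qed
    then show "(\<forall>c\<in>S. f c \<le> f b) \<and> (\<forall>c\<in>S. lex_less M c b \<longrightarrow> f c < f b)"
      using le_m fb by simp
  next
    assume max: "(\<forall>c\<in>S. f c \<le> f b) \<and> (\<forall>c\<in>S. lex_less M c b \<longrightarrow> f c < f b)"
    have "?m \<in> f ` S"
      using S(1) b by (intro Max_in) auto
    then have fb: "f b = ?m"
      using le_m[OF b] max by (auto intro: antisym)
    moreover have "b = c \<or> lex_less M b c" if c: "c \<in> S" "f c = ?m" for c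
    proof (rule ccontr)
      assume "\<not> (b = c \<or> lex_less M b c)"
      then have "lex_less M c b" using lex_less_total[of b M c] S(2) b c(1) by auto
      then show False using max c fb by auto
    qed
    ultimately show "f b = ?m \<and> (\<forall>c\<in>S. f c = ?m \<longrightarrow> b = c \<or> lex_less M b c)"
      by blast
  }
qed

lemma measurable_lex_argmax:
  fixes g :: "nat list \<Rightarrow> 'x \<Rightarrow> ereal"
  assumes S: "finite S" "S \<noteq> {}" "\<forall>a\<in>S. length a = M"
    and g: "\<And>a. a \<in> S \<Longrightarrow> g a \<in> borel_measurable N"
  shows "(\<lambda>x. lex_argmax M S (\<lambda>a. g a x)) \<in> measurable N (count_space UNIV)"
  unfolding measurable_count_space_eq2_countable
proof (intro conjI ballI)
  fix b :: "nat list"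
  show "(\<lambda>x. lex_argmax M S (\<lambda>a. g a x)) -` {b} \<inter> space N \<in> sets N"
  proof (cases "b \<in> S")
    case False
    then have "lex_argmax M S (\<lambda>a. g a x) \<noteq> b" for x
      using lex_argmax_in[OF S, of "\<lambda>a. g a x"] by blast
    then have "(\<lambda>x. lex_argmax M S (\<lambda>a. g a x)) -` {b} = {}"
      by blast
    then show ?thesis by simp
  next
    case True
    have "(\<lambda>x. lex_argmax M S (\<lambda>a. g a x)) -` {b} \<inter> space N =
        {x \<in> space N. (\<forall>c\<in>S. g c x \<le> g b x) \<and> (\<forall>c\<in>S. lex_less M c b \<longrightarrow> g c x < g b x)}"
    proof -
      have "lex_argmax M S (\<lambda>a. g a x) = b \<longleftrightarrow>
          (\<forall>c\<in>S. g c x \<le> g b x) \<and> (\<forall>c\<in>S. lex_less M c b \<longrightarrow> g c x < g b x)" for x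
        by (rule lex_argmax_eq_iff[OF S(1,3) True])
      then show ?thesis by blast
    qed
    also have "\<dots> \<in> sets N"
    proof -
      have "Measurable.pred N (\<lambda>x. (\<forall>c\<in>S. g c x \<le> g b x) \<and> (\<forall>c\<in>S. lex_less M c b \<longrightarrow> g c x < g b x))"
      proof (intro pred_intros_logic pred_intros_finite[OF S(1)])
        fix c assume "c \<in> S"
        show "Measurable.pred N (\<lambda>x. g c x \<le> g b x)"
          unfolding pred_def using g[OF \<open>c \<in> S\<close>] g[OF True] by measurable
        show "Measurable.pred N (\<lambda>x. g c x < g b x)"
          unfolding pred_def using g[OF \<open>c \<in> S\<close>] g[OF True] by measurable
        show "Measurable.pred N (\<lambda>x. lex_less M c b)" by simp
      qed
      then show ?thesis by (rule predE)
    qed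
    finally show ?thesis .
  qed
qed simp

section \<open>Arm tuples and the initial phase\<close>

lemma arm_tuples_length: "a \<in> arm_tuples M K \<Longrightarrow> length a = M"
  by (simp add: arm_tuples_def)

lemma finite_arm_tuples: "finite (arm_tuples M K)"
proof (rule finite_subset)
  have "a ! i \<le> sum K {..<M}" if "a \<in> arm_tuples M K" "i < M" for a i
  proof -
    have "a ! i \<le> K i" using that by (simp add: arm_tuples_def)
    also have "K i \<le> sum K {..<M}" using that(2) by (intro member_le_sum) auto
    finally show ?thesis .
  qed
  then show "arm_tuples M K \<subseteq> {xs. set xs \<subseteq> {..sum K {..<M}} \<and> length xs = M}"
    by (auto simp: in_set_conv_nth arm_tuples_length)
qed (rule finite_lists_length_eq, simp)

definition init_tuple :: "nat \<Rightarrow> (nat \<Rightarrow> nat) \<Rightarrow> nat \<Rightarrow> nat list" where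
  "init_tuple M K t = map (\<lambda>i. init_arm M K i t) [0..<M]"

lemma init_tuple_in_arm_tuples:
  "\<forall>i<M. K i \<ge> 1 \<Longrightarrow> init_tuple M K t \<in> arm_tuples M K"
  by (auto simp: arm_tuples_def init_tuple_def init_arm_def Suc_le_eq)

lemma arm_tuples_nonempty: "\<forall>i<M. K i \<ge> 1 \<Longrightarrow> arm_tuples M K \<noteq> {}"
  using init_tuple_in_arm_tuples by blast

lemma mod_prod_eq_digit_sum:
  fixes m :: nat and K :: "nat \<Rightarrow> nat"
  shows "k \<le> M \<Longrightarrow> m mod (\<Prod>j\<in>{k..<M}. K j) =
     (\<Sum>i\<in>{k..<M}. (m div (\<Prod>j\<in>{i<..<M}. K j)) mod K i * (\<Prod>j\<in>{i<..<M}. K j))"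
proof (induction "M - k" arbitrary: k)
  case 0
  then show ?case by simp
next
  case (Suc d)
  then have k: "k < M" by simp
  let ?Q = "\<Prod>j\<in>{Suc k..<M}. K j"
  have Q: "{k<..<M} = {Suc k..<M}" by auto
  have "m mod (\<Prod>j\<in>{k..<M}. K j) = m mod (?Q * K k)"
    using k by (simp add: prod.atLeast_Suc_lessThan mult.commute)
  also have "\<dots> = ?Q * (m div ?Q mod K k) + m mod ?Q"
    by (rule mod_mult2_eq)
  also have "m mod ?Q = (\<Sum>i\<in>{Suc k..<M}. (m div (\<Prod>j\<in>{i<..<M}. K j)) mod K i * (\<Prod>j\<in>{i<..<M}. K j))"
    using Suc by simp
  finally show ?case
    using k by (simp add: sum.atLeast_Suc_lessThan Q mult.commute)
qed

text \<open>The initial phase enumerates the arm tuples in mixed radix (K 0, ..., K (M - 1)), so no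
  tuple is repeated in the first Kmax M K rounds.\<close>

lemma inj_on_init_tuple: "inj_on (init_tuple M K) {1..Kmax M K}"
proof (rule inj_onI)
  fix s1 s2 assume s: "s1 \<in> {1..Kmax M K}" "s2 \<in> {1..Kmax M K}"
    and eq: "init_tuple M K s1 = init_tuple M K s2"
  have digits: "m = (\<Sum>i\<in>{0..<M}. (m div (\<Prod>j\<in>{i<..<M}. K j)) mod K i * (\<Prod>j\<in>{i<..<M}. K j))"
    if "m < Kmax M K" for m
    using mod_prod_eq_digit_sum[of 0 M m K] that by (simp add: Kmax_def atLeast0LessThan)
  have digit_eq: "(s1 - 1) div (\<Prod>j\<in>{i<..<M}. K j) mod K i = (s2 - 1) div (\<Prod>j\<in>{i<..<M}. K j) mod K i"
    if "i \<in> {0..<M}" for i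
  proof -
    have "init_tuple M K s1 ! i = init_tuple M K s2 ! i" using eq by simp
    then show ?thesis using that by (simp add: init_tuple_def init_arm_def)
  qed
  have "s1 - 1 = (\<Sum>i\<in>{0..<M}. ((s1 - 1) div (\<Prod>j\<in>{i<..<M}. K j)) mod K i * (\<Prod>j\<in>{i<..<M}. K j))"
    using s by (intro digits) auto
  also have "\<dots> = (\<Sum>i\<in>{0..<M}. ((s2 - 1) div (\<Prod>j\<in>{i<..<M}. K j)) mod K i * (\<Prod>j\<in>{i<..<M}. K j))"
    by (rule sum.cong[OF refl]) (simp only: digit_eq)
  also have "\<dots> = s2 - 1"
    using s by (intro digits[symmetric]) auto
  finally show "s1 = s2" using s by simp arith
qed

lemma two_le_Kmax:
  assumes K: "\<forall>i<M. K i \<ge> 1" and ab: "a \<in> arm_tuples M K" "b \<in> arm_tuples M K" "a \<noteq> b"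
  shows "2 \<le> Kmax M K"
proof (rule ccontr)
  assume small: "\<not> 2 \<le> Kmax M K"
  have "K i = 1" if "i < M" for i
  proof -
    have "K i \<le> Kmax M K"
    proof (rule dvd_imp_le)
      show "K i dvd Kmax M K" unfolding Kmax_def using that by (intro dvd_prodI) auto
      show "0 < Kmax M K" unfolding Kmax_def using K by (intro prod_pos) auto
    qed
    then show ?thesis using K that small by fastforce
  qed
  then have "a ! i = b ! i" if "i < M" for i
    using ab(1,2) that unfolding arm_tuples_def by fastforce
  then show False
    using ab nth_equalityI[of a b] by (simp add: arm_tuples_length)
qed

section \<open>The play of mUCB on a reward table\<close>

text \<open>A reward table x fixes the reward x s a that tuple a pays if it is played in round s. The
  play of mUCB is a deterministic function of the table, and the tuple chosen in round t only
  depends on the rounds before t.\<close>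

type_synonym reward_table = "nat \<Rightarrow> nat list \<Rightarrow> real"

definition ucb_radius :: "nat \<Rightarrow> real \<Rightarrow> real" where
  "ucb_radius t n = sqrt (4 * ln (real t) / n)"

definition ucb :: "nat \<Rightarrow> real \<Rightarrow> real \<Rightarrow> ereal" where
  "ucb t n s = (if n = 0 then \<infinity> else ereal (s / n + ucb_radius t n))"

lemma ln_one_over_inverse_square: "ln (1 / (1 / (real t)\<^sup>2)) = 2 * ln (real t)"
  by (cases "t = 0") (simp_all add: ln_realpow)

lemma ucb_index_eq_ucb:
  "ucb_index h a = ucb (length h) (real (n_count h a)) (sum_list (map snd (filter (\<lambda>p. fst p = a) h)))"
  unfolding ucb_index_def ucb_def ucb_radius_def mu_hat_def Let_def ln_one_over_inverse_square by simp

lemma ucb_radius_nonneg: "0 \<le> n \<Longrightarrow> 0 \<le> ucb_radius t n"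
  unfolding ucb_radius_def by (cases "t = 0") auto

lemma ucb_radius_squared: "0 < n \<Longrightarrow> (ucb_radius t n)\<^sup>2 = 4 * ln (real t) / n"
  unfolding ucb_radius_def by (cases "t = 0") auto

locale mucb =
  fixes M :: nat and K :: "nat \<Rightarrow> nat"
  assumes K_pos: "\<forall>i<M. K i \<ge> 1"
begin

abbreviation "A \<equiv> arm_tuples M K"

lemma finite_A: "finite A"
  by (rule finite_arm_tuples)

lemma A_nonempty: "A \<noteq> {}"
  by (rule arm_tuples_nonempty[OF K_pos])

lemma length_A: "\<forall>a\<in>A. length a = M"
  using arm_tuples_length by blast

definition rewards :: "reward_table \<Rightarrow> nat \<Rightarrow> real list" where
  "rewards x t = rewards_upto M K (\<lambda>a s _. x s a) () t"

definition chosen :: "reward_table \<Rightarrow> nat \<Rightarrow> nat list" where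
  "chosen x t = played M K (\<lambda>a s _. x s a) () t"

definition pulls :: "reward_table \<Rightarrow> nat \<Rightarrow> nat list \<Rightarrow> real" where
  "pulls x t a = (\<Sum>s=1..t. if chosen x s = a then 1 else 0)"

definition reward_sum :: "reward_table \<Rightarrow> nat \<Rightarrow> nat list \<Rightarrow> real" where
  "reward_sum x t a = (\<Sum>s=1..t. if chosen x s = a then x s a else 0)"

definition history :: "reward_table \<Rightarrow> nat \<Rightarrow> (nat list \<times> real) list" where
  "history x t = zip (tuples_of M K t (rewards x t)) (rewards x t)"

lemma mucb_choice_eq:
  "mucb_choice M K h = (if length h < Kmax M K then init_tuple M K (Suc (length h))
                        else lex_argmax M A (ucb_index h))"
  unfolding mucb_choice_def lex_argmax_def init_tuple_def Let_def by simp

lemma mucb_choice_in: "mucb_choice M K h \<in> A"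
  unfolding mucb_choice_eq
  using init_tuple_in_arm_tuples[OF K_pos] lex_argmax_in[OF finite_A A_nonempty length_A, of "ucb_index h"] by simp

lemma map_player_arm:
  "map (\<lambda>i. player_arm M K i rs) [0..<M] = mucb_choice M K (zip (tuples_of M K (length rs) rs) rs)"
  unfolding player_arm_def using map_nth arm_tuples_length[OF mucb_choice_in] by metis

lemma length_rewards [simp]: "length (rewards x t) = t"
  by (induction t) (simp_all add: rewards_def Let_def)

lemma rewards_Suc:
  "rewards x (Suc t) = rewards x t @ [x (Suc t) (mucb_choice M K (zip (tuples_of M K t (rewards x t)) (rewards x t)))]"
  using length_rewards[of x t] unfolding rewards_def by (simp add: Let_def map_player_arm)

lemma chosen_eq:
  "chosen x t = mucb_choice M K (zip (tuples_of M K (t - 1) (rewards x (t - 1))) (rewards x (t - 1)))"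
  unfolding chosen_def played_def rewards_def[symmetric] using map_player_arm[of "rewards x (t - 1)"] by simp

lemma chosen_in: "chosen x t \<in> A"
  unfolding chosen_eq by (rule mucb_choice_in)

lemma tuples_of_append: "s \<le> length rs \<Longrightarrow> tuples_of M K s (rs @ ys) = tuples_of M K s rs"
  by (induction s) auto

lemma tuples_of_rewards: "tuples_of M K t (rewards x t) = map (\<lambda>s. chosen x (Suc s)) [0..<t]"
proof (induction t)
  case 0
  then show ?case by simp
next
  case (Suc t)
  have "tuples_of M K t (rewards x (Suc t)) = tuples_of M K t (rewards x t)"
    by (simp add: rewards_Suc tuples_of_append)
  moreover have "take t (rewards x (Suc t)) = rewards x t"
    by (simp add: rewards_Suc)
  moreover have "chosen x (Suc t) = mucb_choice M K (zip (tuples_of M K t (rewards x t)) (rewards x t))"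
    by (simp add: chosen_eq)
  ultimately show ?case
    using Suc.IH by simp
qed

lemma rewards_eq: "rewards x t = map (\<lambda>s. x (Suc s) (chosen x (Suc s))) [0..<t]"
  by (induction t) (simp_all add: rewards_def[of x 0] rewards_Suc chosen_eq)

lemma history_eq: "history x t = map (\<lambda>s. (chosen x (Suc s), x (Suc s) (chosen x (Suc s)))) [0..<t]"
  unfolding history_def tuples_of_rewards unfolding rewards_eq by (simp add: zip_map_map zip_same_conv_map comp_def)

lemma length_history [simp]: "length (history x t) = t"
  by (simp add: history_eq)

lemma n_count_history: "real (n_count (history x t) a) = pulls x t a"
  by (induction t) (simp_all add: history_eq n_count_def pulls_def)

lemma sum_history: "sum_list (map snd (filter (\<lambda>p. fst p = a) (history x t))) = reward_sum x t a"
  by (induction t) (auto simp: history_eq reward_sum_def)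

lemma chosen_Suc:
  "chosen x (Suc t) = (if t < Kmax M K then init_tuple M K (Suc t)
                       else lex_argmax M A (\<lambda>a. ucb t (pulls x t a) (reward_sum x t a)))"
proof -
  have "chosen x (Suc t) = mucb_choice M K (history x t)"
    unfolding chosen_eq history_def by simp
  moreover have "ucb_index (history x t) = (\<lambda>a. ucb t (pulls x t a) (reward_sum x t a))"
    by (rule ext) (simp only: ucb_index_eq_ucb n_count_history sum_history length_history)
  ultimately show ?thesis
    by (simp add: mucb_choice_eq history_eq)
qed

lemma chosen_0: "chosen x 0 = chosen y 0"
  by (simp add: chosen_eq rewards_def)

lemma chosen_cong:
  "(\<And>s a. 1 \<le> s \<Longrightarrow> s < t \<Longrightarrow> a \<in> A \<Longrightarrow> x s a = y s a) \<Longrightarrow> chosen x t = chosen y t"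
proof (induction t rule: less_induct)
  case (less t)
  show ?case
  proof (cases t)
    case 0
    then show ?thesis by (simp add: chosen_0)
  next
    case (Suc t')
    have IH: "chosen x s = chosen y s" if "s \<le> t'" for s
      using less.IH[of s] less.prems that Suc by auto
    have "pulls x t' a = pulls y t' a" for a
      unfolding pulls_def by (intro sum.cong) (auto simp: IH)
    moreover have "reward_sum x t' a = reward_sum y t' a" for a
      unfolding reward_sum_def
      using IH less.prems chosen_in Suc by (intro sum.cong) auto
    ultimately show ?thesis
      unfolding Suc chosen_Suc by simp
  qed
qed

definition table_space :: "nat set \<Rightarrow> reward_table measure" where
  "table_space I = PiM I (\<lambda>_. PiM A (\<lambda>_. borel))"

lemma measurable_table_entry:
  "s \<in> I \<Longrightarrow> a \<in> A \<Longrightarrow> (\<lambda>x. x s a) \<in> borel_measurable (table_space I)"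
  unfolding table_space_def
  using measurable_compose[OF measurable_component_singleton[of s I] measurable_component_singleton[of a A]]
  by simp

lemma measurable_pulls_if_chosen:
  assumes "\<And>s. s \<in> {1..t} \<Longrightarrow> (\<lambda>x. chosen x s) \<in> measurable N (count_space UNIV)"
  shows "(\<lambda>x. pulls x t a) \<in> borel_measurable N"
  unfolding pulls_def
proof (rule borel_measurable_sum)
  fix s assume "s \<in> {1..t}"
  note [measurable] = assms[OF this]
  show "(\<lambda>x. if chosen x s = a then 1 else 0 :: real) \<in> borel_measurable N" by measurable
qed

lemma measurable_reward_sum_if_chosen:
  assumes "\<And>s. s \<in> {1..t} \<Longrightarrow> (\<lambda>x. chosen x s) \<in> measurable N (count_space UNIV)"
    and "\<And>s. s \<in> {1..t} \<Longrightarrow> (\<lambda>x. x s a) \<in> borel_measurable N"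
  shows "(\<lambda>x. reward_sum x t a) \<in> borel_measurable N"
  unfolding reward_sum_def
proof (rule borel_measurable_sum)
  fix s assume "s \<in> {1..t}"
  note [measurable] = assms(1)[OF this] assms(2)[OF this]
  show "(\<lambda>x. if chosen x s = a then x s a else 0) \<in> borel_measurable N" by measurable
qed

lemma measurable_chosen:
  "{1..<t} \<subseteq> I \<Longrightarrow> (\<lambda>x. chosen x t) \<in> measurable (table_space I) (count_space UNIV)"
proof (induction t rule: less_induct)
  case (less t)
  show ?case
  proof (cases t)
    case 0
    then have "(\<lambda>x. chosen x t) = (\<lambda>x. chosen (\<lambda>_ _. 0) 0)"
      using chosen_0 by auto
    then show ?thesis by simp
  next
    case (Suc t')
    have chosen_meas: "(\<lambda>x. chosen x s) \<in> measurable (table_space I) (count_space UNIV)"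
      if "s \<in> {1..t'}" for s
    proof (rule less.IH)
      show "s < t" "{1..<s} \<subseteq> I" using less.prems that Suc by auto
    qed
    have entry_meas: "(\<lambda>x. x s a) \<in> borel_measurable (table_space I)" if "a \<in> A" "s \<in> {1..t'}" for a s
      using less.prems that Suc by (intro measurable_table_entry) auto
    have index_meas: "(\<lambda>x. ucb t' (pulls x t' a) (reward_sum x t' a)) \<in> borel_measurable (table_space I)"
      if "a \<in> A" for a
    proof -
      note [measurable] = measurable_pulls_if_chosen[OF chosen_meas]
        measurable_reward_sum_if_chosen[OF chosen_meas entry_meas[OF that]]
      show ?thesis unfolding ucb_def ucb_radius_def by measurable
    qed
    show ?thesis
      unfolding Suc chosen_Suc
      using measurable_lex_argmax[OF finite_A A_nonempty length_A index_meas] by simp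
  qed
qed

lemma measurable_pulls: "{1..t} \<subseteq> I \<Longrightarrow> (\<lambda>x. pulls x t a) \<in> borel_measurable (table_space I)"
  by (intro measurable_pulls_if_chosen measurable_chosen) auto

lemma measurable_reward_sum:
  "{1..t} \<subseteq> I \<Longrightarrow> a \<in> A \<Longrightarrow> (\<lambda>x. reward_sum x t a) \<in> borel_measurable (table_space I)"
  by (intro measurable_reward_sum_if_chosen measurable_chosen measurable_table_entry) auto

lemma pulls_Suc: "pulls x (Suc t) a = pulls x t a + (if chosen x (Suc t) = a then 1 else 0)"
  unfolding pulls_def by (simp add: atLeastAtMostSuc_conv)

lemma reward_sum_Suc:
  "reward_sum x (Suc t) a = reward_sum x t a + (if chosen x (Suc t) = a then x (Suc t) a else 0)"
  unfolding reward_sum_def by (simp add: atLeastAtMostSuc_conv)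

lemma pulls_nonneg: "0 \<le> pulls x t a"
  unfolding pulls_def by (rule sum_nonneg) auto

lemma pulls_le: "pulls x t a \<le> t"
  unfolding pulls_def using sum_mono[of "{1..t}" "\<lambda>s. if chosen x s = a then 1 else 0" "\<lambda>_. 1::real"]
  by simp

lemma pulls_in_range: "pulls x t a \<in> real ` {0..t}"
  by (induction t) (auto simp: pulls_Suc pulls_def[of x 0] image_iff intro: bexI[of _ "Suc _"])

lemma chosen_init_phase: "1 \<le> s \<Longrightarrow> s \<le> Kmax M K \<Longrightarrow> chosen x s = init_tuple M K s"
  by (cases s) (auto simp: chosen_Suc)

lemma pulls_init_phase: "t < Kmax M K \<Longrightarrow> pulls x t (chosen x (Suc t)) = 0"
  unfolding pulls_def
proof (rule sum.neutral, intro ballI)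
  fix s assume s: "s \<in> {1..t}" and t: "t < Kmax M K"
  have "init_tuple M K s \<noteq> init_tuple M K (Suc t)"
    using inj_on_init_tuple[of M K] s t by (auto dest: inj_onD)
  then show "(if chosen x s = chosen x (Suc t) then 1 else 0) = 0"
    using s t by (simp add: chosen_init_phase)
qed

lemma pulls_ge_1: "pulls x t a \<noteq> 0 \<Longrightarrow> 1 \<le> pulls x t a"
  using pulls_in_range[of x t a] by auto

lemma pulls_ge_1_cases:
  assumes "1 \<le> pulls x t a"
  obtains n where "n \<in> {1..t}" "pulls x t a = real n"
  using pulls_in_range[of x t a] assms by fastforce

definition index_below :: "real \<Rightarrow> nat list \<Rightarrow> reward_table \<Rightarrow> nat \<Rightarrow> bool" where
  "index_below m a x t \<longleftrightarrow>
     1 \<le> pulls x t a \<and> reward_sum x t a / pulls x t a + ucb_radius t (pulls x t a) \<le> m"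

definition index_above :: "real \<Rightarrow> real \<Rightarrow> nat list \<Rightarrow> reward_table \<Rightarrow> nat \<Rightarrow> bool" where
  "index_above m u b x t \<longleftrightarrow>
     u \<le> pulls x t b \<and> 1 \<le> pulls x t b \<and> m < reward_sum x t b / pulls x t b + ucb_radius t (pulls x t b)"

definition bad_rounds :: "real \<Rightarrow> real \<Rightarrow> nat list \<Rightarrow> nat list \<Rightarrow> reward_table \<Rightarrow> nat \<Rightarrow> real" where
  "bad_rounds m u a b x T = (\<Sum>t\<in>{Kmax M K..<T}.
     (if index_below m a x t then 1 else 0) + (if index_above m u b x t then 1 else 0))"

lemma chosen_imp_bad_index:
  assumes a: "a \<in> A" and b: "b \<in> A" and chosen: "chosen x (Suc t) = b"
  shows "pulls x t b < u \<or> pulls x t b = 0 \<or> (Kmax M K \<le> t \<and> (index_below m a x t \<or> index_above m u b x t))"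
proof (cases "t < Kmax M K")
  case True
  then show ?thesis using pulls_init_phase chosen by auto
next
  case False
  define g where "g c = ucb t (pulls x t c) (reward_sum x t c)" for c
  have "lex_argmax M A g = b"
    using chosen False unfolding chosen_Suc g_def by simp
  then have le: "g a \<le> g b"
    using lex_argmax_eq_iff[OF finite_A length_A b, of g] a by auto
  have "index_below m a x t \<or> index_above m u b x t"
    if "\<not> pulls x t b < u" "pulls x t b \<noteq> 0"
  proof (cases "pulls x t a = 0")
    case True
    then show ?thesis using le that(2) unfolding g_def ucb_def by simp
  next
    case False
    then show ?thesis
      using le that pulls_ge_1[of x t a] pulls_ge_1[of x t b]
      unfolding g_def ucb_def index_below_def index_above_def by auto
  qed
  then show ?thesis using False by auto
qed

lemma pulls_le_bad_rounds:
  assumes a: "a \<in> A" and b: "b \<in> A" and u: "0 \<le> u"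
  shows "pulls x T b \<le> u + 1 + bad_rounds m u a b x T"
proof (induction T)
  case 0
  then show ?case using u by (simp add: pulls_def bad_rounds_def)
next
  case (Suc T)
  have bad_Suc: "bad_rounds m u a b x (Suc T) = bad_rounds m u a b x T +
      (if Kmax M K \<le> T then (if index_below m a x T then 1 else 0) + (if index_above m u b x T then 1 else 0) else 0)"
    unfolding bad_rounds_def by (simp add: atLeastLessThanSuc)
  have bad_nonneg: "0 \<le> bad_rounds m u a b x T'" for T'
    unfolding bad_rounds_def by (rule sum_nonneg) auto
  show ?case
  proof (cases "chosen x (Suc T) = b")
    case False
    then show ?thesis using Suc.IH by (simp add: pulls_Suc bad_Suc)
  next
    case True
    then have "pulls x (Suc T) b = pulls x T b + 1" by (simp add: pulls_Suc)
    then show ?thesis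
      using chosen_imp_bad_index[OF a b True, of u m] Suc.IH bad_nonneg[of T] u
      by (auto simp: bad_Suc)
  qed
qed

end

section \<open>Concentration and elementary estimates\<close>

lemma (in interval_bounded_random_variable) Hoeffdings_lemma_nn_integral_real:
  "(\<integral>\<^sup>+x. ennreal (exp (l * (f x - expectation f))) \<partial>M) \<le> ennreal (exp (l\<^sup>2 * (b - a)\<^sup>2 / 8))"
proof (cases l "0::real" rule: linorder_cases)
  case less
  interpret neg: interval_bounded_random_variable M "\<lambda>x. - f x" "- b" "- a"
    by unfold_locales (auto intro: eventually_mono[OF AE_in_interval])
  have "(\<integral>\<^sup>+x. ennreal (exp ((- l) * (- f x - expectation (\<lambda>x. - f x)))) \<partial>M)
      \<le> ennreal (exp ((- l)\<^sup>2 * (- a - - b)\<^sup>2 / 8))"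
    using less by (intro neg.Hoeffdings_lemma_nn_integral) simp
  then show ?thesis by (simp add: algebra_simps)
next
  case equal
  then show ?thesis by (simp add: emeasure_space_1)
next
  case greater
  then show ?thesis by (rule Hoeffdings_lemma_nn_integral)
qed

lemma nn_integral_exp_centered_le_1:
  assumes N: "prob_space N" "sets N = sets borel" and supp: "AE x in N. 0 \<le> x \<and> x \<le> 1"
  shows "(\<integral>\<^sup>+x. ennreal (exp (l * (x - integral\<^sup>L N (\<lambda>x. x)) - l\<^sup>2 / 8)) \<partial>N) \<le> 1"
proof -
  have "interval_bounded_random_variable N (\<lambda>x. x) 0 1"
  proof (intro interval_bounded_random_variable.intro interval_bounded_random_variable_axioms.intro N(1))
    show "(\<lambda>x. x) \<in> borel_measurable N" by (subst measurable_cong_sets[OF N(2) refl]) measurable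
    show "AE x in N. x \<in> {0..1}" using supp by (auto elim!: eventually_mono)
  qed
  then interpret interval_bounded_random_variable N "\<lambda>x. x" 0 1 .
  have "(\<integral>\<^sup>+x. ennreal (exp (l * (x - expectation (\<lambda>x. x)) - l\<^sup>2 / 8)) \<partial>N)
      = (\<integral>\<^sup>+x. ennreal (exp (l * (x - expectation (\<lambda>x. x)))) * ennreal (exp (- (l\<^sup>2 / 8))) \<partial>N)"
    by (intro nn_integral_cong) (simp add: ennreal_mult[symmetric] exp_add[symmetric])
  also have "\<dots> = (\<integral>\<^sup>+x. ennreal (exp (l * (x - expectation (\<lambda>x. x)))) \<partial>N) * ennreal (exp (- (l\<^sup>2 / 8)))"
    by (rule nn_integral_multc) measurable
  also have "\<dots> \<le> ennreal (exp (l\<^sup>2 / 8)) * ennreal (exp (- (l\<^sup>2 / 8)))"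
    using Hoeffdings_lemma_nn_integral_real[of l] by (intro mult_right_mono) simp_all
  also have "\<dots> = 1"
    by (simp add: ennreal_mult[symmetric] exp_minus)
  finally show ?thesis .
qed

lemma (in prob_space) indep_var_nn_integral:
  fixes X1 X2 :: "'a \<Rightarrow> ennreal"
  assumes "indep_var borel X1 borel X2"
  shows "(\<integral>\<^sup>+\<omega>. X1 \<omega> * X2 \<omega> \<partial>M) = (\<integral>\<^sup>+\<omega>. X1 \<omega> \<partial>M) * (\<integral>\<^sup>+\<omega>. X2 \<omega> \<partial>M)"
proof -
  have "(\<lambda>_. borel) = case_bool borel borel"
    by (rule ext) (simp split: bool.split)
  then have "indep_vars (\<lambda>_. borel) (case_bool X1 X2) UNIV"
    using assms unfolding indep_var_def by metis
  then have "(\<integral>\<^sup>+\<omega>. (\<Prod>i\<in>UNIV. case_bool X1 X2 i \<omega>) \<partial>M) = (\<Prod>i\<in>UNIV. \<integral>\<^sup>+\<omega>. case_bool X1 X2 i \<omega> \<partial>M)"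
    by (intro indep_vars_nn_integral) auto
  then show ?thesis
    by (simp add: UNIV_bool mult.commute)
qed

lemma (in finite_measure) measure_le_card_mult:
  assumes cover: "S \<subseteq> (\<Union>n\<in>N. E n)" and N: "finite N" "E ` N \<subseteq> sets M"
    and bound: "\<And>n. n \<in> N \<Longrightarrow> measure M (E n) \<le> c"
  shows "measure M S \<le> real (card N) * c"
proof -
  have "measure M S \<le> measure M (\<Union>n\<in>N. E n)"
    using cover N by (intro finite_measure_mono) auto
  also have "\<dots> \<le> (\<Sum>n\<in>N. measure M (E n))"
    using N by (intro finite_measure_subadditive_finite) auto
  also have "\<dots> \<le> (\<Sum>n\<in>N. c)"
    by (rule sum_mono) (rule bound)
  finally show ?thesis by simp
qed

lemma integral_if_eq_measure:
  "integral\<^sup>L M (\<lambda>\<omega>. if Q \<omega> then 1 else 0 :: real) = measure M {\<omega>\<in>space M. Q \<omega>}"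
proof -
  have "integral\<^sup>L M (\<lambda>\<omega>. if Q \<omega> then 1 else 0 :: real) = integral\<^sup>L M (indicator {\<omega>\<in>space M. Q \<omega>})"
    by (rule Bochner_Integration.integral_cong) (auto simp: indicator_def)
  then show ?thesis
    by (simp add: Int_absorb2)
qed

lemma sum_inverse_squares_le_1: "(\<Sum>t\<in>{2..<N}. 1 / (real t)\<^sup>2) \<le> 1"
proof -
  have telescope: "(\<Sum>t\<in>{2..<Suc (Suc m)}. 1 / (real t)\<^sup>2) \<le> 1 - 1 / (real m + 1)" for m
  proof (induction m)
    case 0
    then show ?case by simp
  next
    case (Suc m)
    have "1 / (real m + 2)\<^sup>2 \<le> 1 / ((real m + 1) * (real m + 2))"
      by (intro divide_left_mono) (auto simp: power2_eq_square intro!: mult_mono)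
    also have "\<dots> = 1 / (real m + 1) - 1 / (real (Suc m) + 1)"
      by (simp add: field_simps)
    finally have "1 / (real m + 2)\<^sup>2 \<le> 1 / (real m + 1) - 1 / (real (Suc m) + 1)" .
    moreover have "(\<Sum>t\<in>{2..<Suc (Suc (Suc m))}. 1 / (real t)\<^sup>2)
        = (\<Sum>t\<in>{2..<Suc (Suc m)}. 1 / (real t)\<^sup>2) + 1 / (real m + 2)\<^sup>2"
      by (simp add: atLeastLessThanSuc add.commute)
    ultimately show ?case
      using Suc.IH by linarith
  qed
  have "(\<Sum>t\<in>{2..<N}. 1 / (real t)\<^sup>2) \<le> (\<Sum>t\<in>{2..<Suc (Suc N)}. 1 / (real t)\<^sup>2)"
    by (rule sum_mono2) auto
  also have "\<dots> \<le> 1 - 1 / (real N + 1)"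
    by (rule telescope)
  also have "\<dots> \<le> 1"
    by simp
  finally show ?thesis .
qed

lemma chernoff_exponent_index_below:
  fixes n W s m :: real
  assumes n: "0 < n" and W: "0 \<le> W" and below: "s / n + W \<le> m"
  shows "2 * (W\<^sup>2 * n) \<le> (- 4 * W) * (s - m * n) - (- 4 * W)\<^sup>2 / 8 * n"
proof -
  have "n * W \<le> m * n - s"
    using below n by (simp add: field_simps)
  then have "4 * W * (n * W) \<le> 4 * W * (m * n - s)"
    using W by (intro mult_left_mono) auto
  then show ?thesis
    by (simp add: power2_eq_square algebra_simps)
qed

text \<open>The constant 6 + 4 sqrt 2 is chosen so that, after n pulls with n \<Delta>^2 \<ge> (6 + 4 sqrt 2) L,
  the confidence radius is at most (2 - sqrt 2) \<Delta> and the remaining deviation (sqrt 2 - 1) \<Delta>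
  has Chernoff exponent 4 L.\<close>

lemma radius_le_of_many_pulls:
  fixes n W \<Delta> L :: real
  assumes n: "0 < n" and \<Delta>: "0 \<le> \<Delta>" and W: "W\<^sup>2 * n \<le> 4 * L"
    and many: "(6 + 4 * sqrt 2) * L \<le> n * \<Delta>\<^sup>2"
  shows "W \<le> (2 - sqrt 2) * \<Delta>"
proof -
  define C where "C = 6 + 4 * sqrt 2"
  have C: "0 < C" "(2 - sqrt 2)\<^sup>2 * C = 4"
    unfolding C_def by (simp_all add: add_pos_nonneg power2_eq_square algebra_simps)
  have "W\<^sup>2 * C * n \<le> 4 * L * C"
    using W C(1) by (simp add: mult.commute mult.left_commute mult_left_mono)
  also have "\<dots> \<le> 4 * \<Delta>\<^sup>2 * n"
    using many by (simp add: C_def algebra_simps)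
  finally have "W\<^sup>2 * C \<le> 4 * \<Delta>\<^sup>2"
    using n by (simp add: mult_ac)
  also have "4 * \<Delta>\<^sup>2 = ((2 - sqrt 2) * \<Delta>)\<^sup>2 * C"
    using C(2) by (simp add: power_mult_distrib mult_ac)
  finally have "W\<^sup>2 \<le> ((2 - sqrt 2) * \<Delta>)\<^sup>2"
    using C(1) by simp
  then show ?thesis
    by (rule power2_le_imp_le) (use \<Delta> in \<open>simp add: real_le_lsqrt\<close>)
qed

lemma chernoff_exponent_index_above:
  fixes n W s m \<Delta> L :: real
  assumes n: "0 < n" and \<Delta>: "0 < \<Delta>" and W: "W\<^sup>2 * n \<le> 4 * L"
    and many: "(6 + 4 * sqrt 2) * L \<le> n * \<Delta>\<^sup>2" and above: "m < s / n + W"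
  shows "4 * L \<le> 4 * ((sqrt 2 - 1) * \<Delta>) * (s - (m - \<Delta>) * n) - (4 * ((sqrt 2 - 1) * \<Delta>))\<^sup>2 / 8 * n"
proof -
  define \<epsilon> where "\<epsilon> = (sqrt 2 - 1) * \<Delta>"
  have "n * \<epsilon> \<le> n * (\<Delta> - W)"
    using radius_le_of_many_pulls[OF n _ W many] n \<Delta> unfolding \<epsilon>_def
    by (intro mult_left_mono) (auto simp: algebra_simps)
  also have "n * (\<Delta> - W) < s - (m - \<Delta>) * n"
    using above n by (simp add: field_simps)
  finally have deviation: "n * \<epsilon> \<le> s - (m - \<Delta>) * n" by simp
  have "2 * L = (sqrt 2 - 1)\<^sup>2 * ((6 + 4 * sqrt 2) * L)"
    by (simp add: power2_eq_square algebra_simps)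
  also have "\<dots> \<le> (sqrt 2 - 1)\<^sup>2 * (n * \<Delta>\<^sup>2)"
    using many by (intro mult_left_mono) auto
  also have "\<dots> = n * \<epsilon>\<^sup>2"
    unfolding \<epsilon>_def by (simp add: power_mult_distrib)
  finally have "2 * L \<le> n * \<epsilon>\<^sup>2" .
  moreover have "4 * \<epsilon> * (n * \<epsilon>) \<le> 4 * \<epsilon> * (s - (m - \<Delta>) * n)"
    using deviation \<Delta> unfolding \<epsilon>_def by (intro mult_left_mono) auto
  ultimately show ?thesis
    unfolding \<epsilon>_def[symmetric] by (simp add: power2_eq_square algebra_simps)
qed

lemma exp_neg_mult_ln: "0 < x \<Longrightarrow> exp (- (of_nat k * ln x)) = 1 / (x::real) ^ k"
  by (simp add: exp_minus exp_of_nat_mult inverse_eq_divide)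

lemma (in finite_measure) integrable_if_one_zero:
  "Measurable.pred M Q \<Longrightarrow> integrable M (\<lambda>\<omega>. if Q \<omega> then 1 else 0 :: real)"
  by (rule integrable_const_bound[where B = 1]) auto

section \<open>The random play\<close>

locale mucb_bandit = mucb M K + prob_space P
  for M :: nat and K :: "nat \<Rightarrow> nat" and P :: "'w measure" +
  fixes X :: "nat list \<Rightarrow> nat \<Rightarrow> 'w \<Rightarrow> real"
    and F :: "nat list \<Rightarrow> real measure"
    and \<mu> :: "nat list \<Rightarrow> real"
  assumes F_prob: "\<forall>a\<in>arm_tuples M K. prob_space (F a) \<and> sets (F a) = sets borel"
    and F_supp: "\<forall>a\<in>arm_tuples M K. AE x in F a. 0 \<le> x \<and> x \<le> 1"
    and mu_def: "\<forall>a\<in>arm_tuples M K. \<mu> a = integral\<^sup>L (F a) (\<lambda>x. x)"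
    and X_meas: "\<forall>a\<in>arm_tuples M K. \<forall>t\<ge>1. X a t \<in> borel_measurable P"
    and X_distr: "\<forall>a\<in>arm_tuples M K. \<forall>t\<ge>1. distr P borel (X a t) = F a"
    and X_indep: "indep_vars (\<lambda>_. PiM (arm_tuples M K) (\<lambda>_. borel))
                    (\<lambda>t \<omega>. restrict (\<lambda>a. X a t \<omega>) (arm_tuples M K)) {1..}"
begin

definition table :: "'w \<Rightarrow> reward_table" where
  "table \<omega> = (\<lambda>s a. X a s \<omega>)"

definition table_on :: "nat set \<Rightarrow> 'w \<Rightarrow> reward_table" where
  "table_on I \<omega> = restrict (\<lambda>s. restrict (\<lambda>a. X a s \<omega>) A) I"

lemma played_eq_chosen: "played M K X \<omega> t = chosen (table \<omega>) t"
proof -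
  have "rewards_upto M K X \<omega> t = rewards (table \<omega>) t" for t
    unfolding rewards_def table_def by (induction t) (simp_all add: Let_def)
  then show ?thesis
    unfolding chosen_def played_def rewards_def table_def by simp
qed

lemma measurable_table_on: "I \<subseteq> {1..} \<Longrightarrow> table_on I \<in> measurable P (table_space I)"
  unfolding table_on_def table_space_def
  by (rule measurable_restrict) (use X_indep in \<open>auto simp: indep_vars_def\<close>)

lemma table_on_apply: "s \<in> I \<Longrightarrow> a \<in> A \<Longrightarrow> table_on I \<omega> s a = X a s \<omega>"
  unfolding table_on_def by simp

lemma chosen_table_on: "{1..<t} \<subseteq> I \<Longrightarrow> chosen (table_on I \<omega>) t = chosen (table \<omega>) t"
  by (rule chosen_cong) (auto simp: table_on_apply table_def)

lemma pulls_table_on: "{1..t} \<subseteq> I \<Longrightarrow> pulls (table_on I \<omega>) t a = pulls (table \<omega>) t a"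
  unfolding pulls_def by (intro sum.cong refl) (subst chosen_table_on, auto)

lemma reward_sum_table_on:
  "{1..t} \<subseteq> I \<Longrightarrow> a \<in> A \<Longrightarrow> reward_sum (table_on I \<omega>) t a = reward_sum (table \<omega>) t a"
  unfolding reward_sum_def
  by (intro sum.cong refl) (auto simp: chosen_table_on table_on_apply table_def subset_iff)

lemma measurable_chosen_table [measurable]:
  "(\<lambda>\<omega>. chosen (table \<omega>) t) \<in> measurable P (count_space UNIV)"
proof -
  have "(\<lambda>\<omega>. chosen (table_on {1..<t} \<omega>) t) \<in> measurable P (count_space UNIV)"
  proof (rule measurable_compose[OF _ measurable_chosen])
    show "table_on {1..<t} \<in> measurable P (table_space {1..<t})" by (rule measurable_table_on) auto
  qed simp
  then show ?thesis using chosen_table_on[of t "{1..<t}"] by simp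
qed

lemma measurable_pulls_table [measurable]: "(\<lambda>\<omega>. pulls (table \<omega>) t a) \<in> borel_measurable P"
proof -
  have "(\<lambda>\<omega>. pulls (table_on {1..t} \<omega>) t a) \<in> borel_measurable P"
  proof (rule measurable_compose[OF _ measurable_pulls])
    show "table_on {1..t} \<in> measurable P (table_space {1..t})" by (rule measurable_table_on) auto
  qed simp
  then show ?thesis using pulls_table_on[of t "{1..t}"] by simp
qed

lemma measurable_reward_sum_table:
  "a \<in> A \<Longrightarrow> (\<lambda>\<omega>. reward_sum (table \<omega>) t a) \<in> borel_measurable P"
proof -
  assume a: "a \<in> A"
  have "(\<lambda>\<omega>. reward_sum (table_on {1..t} \<omega>) t a) \<in> borel_measurable P"
  proof (rule measurable_compose[OF _ measurable_reward_sum])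
    show "table_on {1..t} \<in> measurable P (table_space {1..t})" by (rule measurable_table_on) auto
  qed (use a in simp_all)
  then show ?thesis using reward_sum_table_on[of t "{1..t}" a] a by simp
qed

lemma indep_past_next_round:
  "indep_var (table_space {1..t}) (table_on {1..t}) (table_space {Suc t}) (table_on {Suc t})"
  unfolding table_space_def table_on_def
  using indep_var_restrict[OF X_indep, of "{1..t}" "{Suc t}"] by auto

lemma nn_integral_exp_reward_le_1:
  assumes a: "a \<in> A" and t: "t \<ge> 1"
  shows "(\<integral>\<^sup>+\<omega>. ennreal (exp (l * (X a t \<omega> - \<mu> a) - l\<^sup>2 / 8)) \<partial>P) \<le> 1"
proof -
  have "(\<integral>\<^sup>+\<omega>. ennreal (exp (l * (X a t \<omega> - \<mu> a) - l\<^sup>2 / 8)) \<partial>P)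
      = (\<integral>\<^sup>+y. ennreal (exp (l * (y - \<mu> a) - l\<^sup>2 / 8)) \<partial>distr P borel (X a t))"
    using X_meas a t by (intro nn_integral_distr[symmetric]) auto
  also have "\<dots> = (\<integral>\<^sup>+y. ennreal (exp (l * (y - integral\<^sup>L (F a) (\<lambda>x. x)) - l\<^sup>2 / 8)) \<partial>F a)"
    using X_distr mu_def a t by simp
  also have "\<dots> \<le> 1"
    using F_prob F_supp a by (intro nn_integral_exp_centered_le_1) auto
  finally show ?thesis .
qed

definition exp_process :: "real \<Rightarrow> nat list \<Rightarrow> reward_table \<Rightarrow> nat \<Rightarrow> real" where
  "exp_process l a x t = exp (l * (reward_sum x t a - \<mu> a * pulls x t a) - l\<^sup>2 / 8 * pulls x t a)"

lemma exp_process_Suc: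
  "exp_process l a x (Suc t) = exp_process l a x t *
     (if chosen x (Suc t) = a then exp (l * (x (Suc t) a - \<mu> a) - l\<^sup>2 / 8) else 1)"
  unfolding exp_process_def pulls_Suc reward_sum_Suc by (simp add: exp_add[symmetric] algebra_simps)

lemma measurable_exp_process:
  "a \<in> A \<Longrightarrow> (\<lambda>x. exp_process l a x t) \<in> borel_measurable (table_space {1..t})"
proof -
  assume a: "a \<in> A"
  note [measurable] = measurable_pulls[of t "{1..t}" a] measurable_reward_sum[of t "{1..t}" a]
  show ?thesis unfolding exp_process_def using a by measurable
qed

lemma exp_process_table_on:
  "a \<in> A \<Longrightarrow> exp_process l a (table_on {1..t} \<omega>) t = exp_process l a (table \<omega>) t"
  unfolding exp_process_def by (simp add: pulls_table_on reward_sum_table_on)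

lemma measurable_exp_process_table:
  assumes a: "a \<in> A"
  shows "(\<lambda>\<omega>. exp_process l a (table \<omega>) t) \<in> borel_measurable P"
proof -
  have "(\<lambda>\<omega>. exp_process l a (table_on {1..t} \<omega>) t) \<in> borel_measurable P"
  proof (rule measurable_compose[OF _ measurable_exp_process[OF a]])
    show "table_on {1..t} \<in> measurable P (table_space {1..t})" by (rule measurable_table_on) auto
  qed
  then show ?thesis using exp_process_table_on[OF a] by simp
qed

lemma nn_integral_past_mult_exp_reward_le:
  assumes a: "a \<in> A" and f: "f \<in> borel_measurable (table_space {1..t})"
  shows "(\<integral>\<^sup>+\<omega>. f (table_on {1..t} \<omega>) * ennreal (exp (l * (X a (Suc t) \<omega> - \<mu> a) - l\<^sup>2 / 8)) \<partial>P)
           \<le> (\<integral>\<^sup>+\<omega>. f (table_on {1..t} \<omega>) \<partial>P)"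
proof -
  define factor where "factor x = ennreal (exp (l * (x (Suc t) a - \<mu> a) - l\<^sup>2 / 8))" for x :: reward_table
  have factor_table_on: "factor (table_on {Suc t} \<omega>) = ennreal (exp (l * (X a (Suc t) \<omega> - \<mu> a) - l\<^sup>2 / 8))" for \<omega>
    using a by (simp add: factor_def table_on_apply)
  have "factor \<in> borel_measurable (table_space {Suc t})"
    unfolding factor_def using measurable_table_entry[of "Suc t" "{Suc t}" a] a by measurable
  then have "(\<integral>\<^sup>+\<omega>. f (table_on {1..t} \<omega>) * factor (table_on {Suc t} \<omega>) \<partial>P)
      = (\<integral>\<^sup>+\<omega>. f (table_on {1..t} \<omega>) \<partial>P) * (\<integral>\<^sup>+\<omega>. factor (table_on {Suc t} \<omega>) \<partial>P)"
    using indep_var_nn_integral[OF indep_var_compose[OF indep_past_next_round f]] by (simp add: comp_def)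
  also have "\<dots> \<le> (\<integral>\<^sup>+\<omega>. f (table_on {1..t} \<omega>) \<partial>P) * 1"
    unfolding factor_table_on using a by (intro mult_left_mono nn_integral_exp_reward_le_1) auto
  finally show ?thesis
    unfolding factor_table_on by simp
qed

lemma nn_integral_exp_process_Suc_le:
  assumes a: "a \<in> A"
  shows "(\<integral>\<^sup>+\<omega>. exp_process l a (table \<omega>) (Suc t) \<partial>P) \<le> (\<integral>\<^sup>+\<omega>. exp_process l a (table \<omega>) t \<partial>P)"
proof -
  define stay where "stay x = ennreal (exp_process l a x t * (if chosen x (Suc t) = a then 0 else 1))" for x
  define move where "move x = ennreal (exp_process l a x t * (if chosen x (Suc t) = a then 1 else 0))" for x
  have [measurable]: "(\<lambda>x. chosen x (Suc t)) \<in> measurable (table_space {1..t}) (count_space UNIV)"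
    by (rule measurable_chosen) auto
  note [measurable] = measurable_exp_process[OF a]
  have move_meas [measurable]: "move \<in> borel_measurable (table_space {1..t})"
    unfolding move_def by measurable
  have [measurable]: "stay \<in> borel_measurable (table_space {1..t})"
    unfolding stay_def by measurable
  have [measurable]: "table_on {1..t} \<in> measurable P (table_space {1..t})"
    by (rule measurable_table_on) auto
  have [measurable]: "X a (Suc t) \<in> borel_measurable P"
    using X_meas a by simp
  have "ennreal (exp_process l a (table \<omega>) (Suc t))
      = stay (table_on {1..t} \<omega>) + move (table_on {1..t} \<omega>) * ennreal (exp (l * (X a (Suc t) \<omega> - \<mu> a) - l\<^sup>2 / 8))"
    for \<omega>
  proof -
    have "chosen (table_on {1..t} \<omega>) (Suc t) = chosen (table \<omega>) (Suc t)"
      by (rule chosen_table_on) auto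
    moreover have "exp_process l a (table_on {1..t} \<omega>) t = exp_process l a (table \<omega>) t"
      by (rule exp_process_table_on[OF a])
    moreover have "0 \<le> exp_process l a (table \<omega>) t"
      by (simp add: exp_process_def)
    ultimately show ?thesis
      unfolding stay_def move_def exp_process_Suc by (simp add: ennreal_mult[symmetric] table_def)
  qed
  then have "(\<integral>\<^sup>+\<omega>. exp_process l a (table \<omega>) (Suc t) \<partial>P)
      = (\<integral>\<^sup>+\<omega>. stay (table_on {1..t} \<omega>)
                + move (table_on {1..t} \<omega>) * ennreal (exp (l * (X a (Suc t) \<omega> - \<mu> a) - l\<^sup>2 / 8)) \<partial>P)"
    by simp
  also have "\<dots> = (\<integral>\<^sup>+\<omega>. stay (table_on {1..t} \<omega>) \<partial>P)
      + (\<integral>\<^sup>+\<omega>. move (table_on {1..t} \<omega>) * ennreal (exp (l * (X a (Suc t) \<omega> - \<mu> a) - l\<^sup>2 / 8)) \<partial>P)"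
    by (rule nn_integral_add) measurable
  also have "\<dots> \<le> (\<integral>\<^sup>+\<omega>. stay (table_on {1..t} \<omega>) \<partial>P) + (\<integral>\<^sup>+\<omega>. move (table_on {1..t} \<omega>) \<partial>P)"
    by (intro add_left_mono nn_integral_past_mult_exp_reward_le[OF a move_meas])
  also have "\<dots> = (\<integral>\<^sup>+\<omega>. stay (table_on {1..t} \<omega>) + move (table_on {1..t} \<omega>) \<partial>P)"
    by (rule nn_integral_add[symmetric]) measurable
  also have "\<dots> = (\<integral>\<^sup>+\<omega>. exp_process l a (table \<omega>) t \<partial>P)"
    using exp_process_table_on[OF a] by (intro nn_integral_cong) (simp add: stay_def move_def)
  finally show ?thesis .
qed

lemma nn_integral_exp_process_le_1:
  "a \<in> A \<Longrightarrow> (\<integral>\<^sup>+\<omega>. exp_process l a (table \<omega>) t \<partial>P) \<le> 1"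
proof (induction t)
  case 0
  then show ?case by (simp add: exp_process_def pulls_def reward_sum_def emeasure_space_1)
next
  case (Suc t)
  then show ?case using nn_integral_exp_process_Suc_le order_trans by blast
qed

lemma prob_deviation_le:
  assumes a: "a \<in> A"
  shows "prob {\<omega>\<in>space P. pulls (table \<omega>) t a = n \<and>
            c \<le> l * (reward_sum (table \<omega>) t a - \<mu> a * n) - l\<^sup>2 / 8 * n} \<le> exp (- c)"
    (is "prob ?E \<le> _")
proof -
  note [measurable] = measurable_reward_sum_table[OF a] measurable_exp_process_table[OF a]
  have E: "?E \<in> sets P" by measurable
  have "emeasure P ?E = (\<integral>\<^sup>+\<omega>. indicator ?E \<omega> \<partial>P)"
    using E by simp
  also have "\<dots> \<le> (\<integral>\<^sup>+\<omega>. ennreal (exp (- c)) * exp_process l a (table \<omega>) t \<partial>P)"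
  proof (intro nn_integral_mono)
    fix \<omega>
    have pos: "0 \<le> exp_process l a (table \<omega>) t"
      by (simp add: exp_process_def)
    have "indicator ?E \<omega> \<le> ennreal (exp (- c) * exp_process l a (table \<omega>) t)"
    proof (cases "\<omega> \<in> ?E")
      case True
      then have "exp c \<le> exp_process l a (table \<omega>) t"
        unfolding exp_process_def by simp
      then have "1 \<le> exp (- c) * exp_process l a (table \<omega>) t"
        by (simp add: exp_minus field_simps)
      then show ?thesis
        using True by (simp add: ennreal_1[symmetric] ennreal_leI del: ennreal_1)
    qed simp
    then show "indicator ?E \<omega> \<le> ennreal (exp (- c)) * exp_process l a (table \<omega>) t"
      using pos by (simp add: ennreal_mult)
  qed
  also have "\<dots> = ennreal (exp (- c)) * (\<integral>\<^sup>+\<omega>. exp_process l a (table \<omega>) t \<partial>P)"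
    by (rule nn_integral_cmult) measurable
  also have "\<dots> \<le> ennreal (exp (- c))"
    using mult_left_mono[OF nn_integral_exp_process_le_1[OF a], of "ennreal (exp (- c))"] by simp
  finally show ?thesis
    using E by (simp add: emeasure_eq_measure)
qed

lemma prob_le_by_chernoff:
  assumes a: "a \<in> A"
    and pulls: "\<And>\<omega>. \<omega> \<in> space P \<Longrightarrow> Q \<omega> \<Longrightarrow> 1 \<le> pulls (table \<omega>) t a"
    and exponent: "\<And>\<omega> n. \<omega> \<in> space P \<Longrightarrow> Q \<omega> \<Longrightarrow> n \<in> {1..t} \<Longrightarrow> pulls (table \<omega>) t a = real n \<Longrightarrow>
                     c \<le> l n * (reward_sum (table \<omega>) t a - \<mu> a * n) - (l n)\<^sup>2 / 8 * n"
  shows "prob {\<omega>\<in>space P. Q \<omega>} \<le> real t * exp (- c)"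
proof -
  define E where "E n = {\<omega>\<in>space P. pulls (table \<omega>) t a = real n \<and>
     c \<le> l n * (reward_sum (table \<omega>) t a - \<mu> a * real n) - (l n)\<^sup>2 / 8 * real n}" for n :: nat
  have "prob {\<omega>\<in>space P. Q \<omega>} \<le> real (card {1..t}) * exp (- c)"
  proof (rule measure_le_card_mult)
    show "{\<omega>\<in>space P. Q \<omega>} \<subseteq> (\<Union>n\<in>{1..t}. E n)"
    proof
      fix \<omega> assume "\<omega> \<in> {\<omega>\<in>space P. Q \<omega>}"
      then have \<omega>: "\<omega> \<in> space P" "Q \<omega>" by auto
      then obtain n where "n \<in> {1..t}" "pulls (table \<omega>) t a = real n"
        using pulls pulls_ge_1_cases by blast
      then show "\<omega> \<in> (\<Union>n\<in>{1..t}. E n)"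
        using \<omega> exponent unfolding E_def by blast
    qed
    note [measurable] = measurable_reward_sum_table[OF a]
    have "E n \<in> sets P" for n
      unfolding E_def by measurable
    then show "E ` {1..t} \<subseteq> sets P"
      by auto
    show "prob (E n) \<le> exp (- c)" for n
      unfolding E_def by (rule prob_deviation_le[OF a])
  qed simp
  then show ?thesis by simp
qed

lemma prob_index_below_le:
  assumes a: "a \<in> A"
  shows "prob {\<omega>\<in>space P. index_below (\<mu> a) a (table \<omega>) t} \<le> real t * exp (- (8 * ln t))"
proof (rule prob_le_by_chernoff[OF a, where l = "\<lambda>n. - 4 * ucb_radius t n"])
  fix \<omega> n assume \<omega>: "index_below (\<mu> a) a (table \<omega>) t" and n: "n \<in> {1..t}" "pulls (table \<omega>) t a = real n"
  have "2 * ((ucb_radius t n)\<^sup>2 * n) \<le> (- 4 * ucb_radius t n) * (reward_sum (table \<omega>) t a - \<mu> a * n)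
                                      - (- 4 * ucb_radius t n)\<^sup>2 / 8 * n"
    using \<omega> n by (intro chernoff_exponent_index_below) (auto simp: index_below_def ucb_radius_nonneg)
  moreover have "(ucb_radius t n)\<^sup>2 * n = 4 * ln t"
    using n by (simp add: ucb_radius_squared)
  ultimately show "8 * ln t \<le> (- 4 * ucb_radius t n) * (reward_sum (table \<omega>) t a - \<mu> a * n)
                                - (- 4 * ucb_radius t n)\<^sup>2 / 8 * n"
    by simp
qed (simp add: index_below_def)

lemma prob_index_above_le:
  fixes t T :: nat
  assumes a: "a \<in> A" and b: "b \<in> A" and gap: "\<mu> b < \<mu> a" and tT: "t \<le> T"
    and u: "u = (6 + 4 * sqrt 2) * ln T / (\<mu> a - \<mu> b)\<^sup>2"
  shows "prob {\<omega>\<in>space P. index_above (\<mu> a) u b (table \<omega>) t} \<le> real t * exp (- (4 * ln T))"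
proof (rule prob_le_by_chernoff[OF b, where l = "\<lambda>_. 4 * ((sqrt 2 - 1) * (\<mu> a - \<mu> b))"])
  fix \<omega> n assume \<omega>: "index_above (\<mu> a) u b (table \<omega>) t" and n: "n \<in> {1..t}" "pulls (table \<omega>) t b = real n"
  have "(ucb_radius t n)\<^sup>2 * n = 4 * ln t"
    using n by (simp add: ucb_radius_squared)
  also have "\<dots> \<le> 4 * ln T"
    using n tT by simp
  finally have radius: "(ucb_radius t n)\<^sup>2 * n \<le> 4 * ln T" .
  have "(6 + 4 * sqrt 2) * ln T = u * (\<mu> a - \<mu> b)\<^sup>2"
    using gap unfolding u by simp
  also have "\<dots> \<le> n * (\<mu> a - \<mu> b)\<^sup>2"
    using \<omega> n by (intro mult_right_mono) (auto simp: index_above_def)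
  finally have "4 * ln T \<le> 4 * ((sqrt 2 - 1) * (\<mu> a - \<mu> b)) * (reward_sum (table \<omega>) t b - (\<mu> a - (\<mu> a - \<mu> b)) * n)
                            - (4 * ((sqrt 2 - 1) * (\<mu> a - \<mu> b)))\<^sup>2 / 8 * n"
    using \<omega> n gap radius by (intro chernoff_exponent_index_above) (auto simp: index_above_def)
  then show "4 * ln T \<le> 4 * ((sqrt 2 - 1) * (\<mu> a - \<mu> b)) * (reward_sum (table \<omega>) t b - \<mu> b * n)
                          - (4 * ((sqrt 2 - 1) * (\<mu> a - \<mu> b)))\<^sup>2 / 8 * n"
    by simp
qed (simp add: index_above_def)

lemma sum_prob_index_below_le_1:
  assumes a: "a \<in> A" and K2: "2 \<le> Kmax M K"
  shows "(\<Sum>t\<in>{Kmax M K..<T}. prob {\<omega>\<in>space P. index_below (\<mu> a) a (table \<omega>) t}) \<le> 1"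
proof -
  have "prob {\<omega>\<in>space P. index_below (\<mu> a) a (table \<omega>) t} \<le> 1 / (real t)\<^sup>2"
    if "t \<in> {Kmax M K..<T}" for t
  proof -
    have t: "2 \<le> t" using that K2 by auto
    have "prob {\<omega>\<in>space P. index_below (\<mu> a) a (table \<omega>) t} \<le> real t * exp (- (8 * ln t))"
      by (rule prob_index_below_le[OF a])
    also have "\<dots> = 1 / (real t)^7"
      using exp_neg_mult_ln[of "real t" 8] t by (simp add: power_eq_if)
    also have "\<dots> \<le> 1 / (real t)\<^sup>2"
      using t by (intro divide_left_mono power_increasing) auto
    finally show ?thesis .
  qed
  then have "(\<Sum>t\<in>{Kmax M K..<T}. prob {\<omega>\<in>space P. index_below (\<mu> a) a (table \<omega>) t})
      \<le> (\<Sum>t\<in>{Kmax M K..<T}. 1 / (real t)\<^sup>2)"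
    by (rule sum_mono)
  also have "\<dots> \<le> (\<Sum>t\<in>{2..<T}. 1 / (real t)\<^sup>2)"
    using K2 by (intro sum_mono2) auto
  also have "\<dots> \<le> 1"
    by (rule sum_inverse_squares_le_1)
  finally show ?thesis .
qed

lemma sum_prob_index_above_le_1:
  assumes a: "a \<in> A" and b: "b \<in> A" and gap: "\<mu> b < \<mu> a" and T: "1 \<le> T"
    and u: "u = (6 + 4 * sqrt 2) * ln T / (\<mu> a - \<mu> b)\<^sup>2"
  shows "(\<Sum>t\<in>{Kmax M K..<T}. prob {\<omega>\<in>space P. index_above (\<mu> a) u b (table \<omega>) t}) \<le> 1"
proof -
  have "(\<Sum>t\<in>{Kmax M K..<T}. prob {\<omega>\<in>space P. index_above (\<mu> a) u b (table \<omega>) t})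
      \<le> (\<Sum>t\<in>{Kmax M K..<T}. real T * (1 / (real T)^4))"
  proof (rule sum_mono)
    fix t assume "t \<in> {Kmax M K..<T}"
    then have tT: "t \<le> T" by simp
    have "prob {\<omega>\<in>space P. index_above (\<mu> a) u b (table \<omega>) t} \<le> real t * exp (- (4 * ln T))"
      by (rule prob_index_above_le[OF a b gap tT u])
    also have "\<dots> = real t * (1 / (real T)^4)"
      using exp_neg_mult_ln[of "real T" 4] T by simp
    also have "\<dots> \<le> real T * (1 / (real T)^4)"
      using tT by (intro mult_right_mono) auto
    finally show "prob {\<omega>\<in>space P. index_above (\<mu> a) u b (table \<omega>) t} \<le> real T * (1 / (real T)^4)" .
  qed
  also have "\<dots> = real (card {Kmax M K..<T}) * (real T * (1 / (real T)^4))"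
    by simp
  also have "\<dots> \<le> real T * (real T * (1 / (real T)^4))"
    by (rule mult_right_mono) auto
  also have "\<dots> = 1 / (real T)\<^sup>2"
    using T by (simp add: power_eq_if field_simps)
  also have "\<dots> \<le> 1"
    using T by (simp add: one_le_power)
  finally show ?thesis .
qed

lemma expected_bad_rounds_le_2:
  assumes a: "a \<in> A" and b: "b \<in> A" and gap: "\<mu> b < \<mu> a" and T: "1 \<le> T"
    and u: "u = (6 + 4 * sqrt 2) * ln T / (\<mu> a - \<mu> b)\<^sup>2"
  shows "integrable P (\<lambda>\<omega>. bad_rounds (\<mu> a) u a b (table \<omega>) T)"
    and "expectation (\<lambda>\<omega>. bad_rounds (\<mu> a) u a b (table \<omega>) T) \<le> 2"
proof -
  note [measurable] = measurable_reward_sum_table[OF a] measurable_reward_sum_table[OF b]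
  have [measurable]: "Measurable.pred P (\<lambda>\<omega>. index_below (\<mu> a) a (table \<omega>) t)" for t
    unfolding index_below_def ucb_radius_def by measurable
  have [measurable]: "Measurable.pred P (\<lambda>\<omega>. index_above (\<mu> a) u b (table \<omega>) t)" for t
    unfolding index_above_def ucb_radius_def by measurable
  define bad_round where "bad_round t \<omega> =
    (if index_below (\<mu> a) a (table \<omega>) t then 1 else 0) + (if index_above (\<mu> a) u b (table \<omega>) t then 1 else 0 :: real)"
    for t \<omega>
  have bad_round: "integrable P (bad_round t)"
    "expectation (bad_round t) = prob {\<omega>\<in>space P. index_below (\<mu> a) a (table \<omega>) t}
                                 + prob {\<omega>\<in>space P. index_above (\<mu> a) u b (table \<omega>) t}" for t
    unfolding bad_round_def
    by (auto intro!: Bochner_Integration.integrable_add integrable_if_one_zero,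
        subst Bochner_Integration.integral_add, auto intro!: integrable_if_one_zero,
        simp only: integral_if_eq_measure)
  have bad_rounds: "bad_rounds (\<mu> a) u a b (table \<omega>) T = (\<Sum>t\<in>{Kmax M K..<T}. bad_round t \<omega>)" for \<omega>
    unfolding bad_rounds_def bad_round_def ..
  show "integrable P (\<lambda>\<omega>. bad_rounds (\<mu> a) u a b (table \<omega>) T)"
    unfolding bad_rounds using bad_round(1) by simp
  have "expectation (\<lambda>\<omega>. bad_rounds (\<mu> a) u a b (table \<omega>) T)
      = (\<Sum>t\<in>{Kmax M K..<T}. prob {\<omega>\<in>space P. index_below (\<mu> a) a (table \<omega>) t})
        + (\<Sum>t\<in>{Kmax M K..<T}. prob {\<omega>\<in>space P. index_above (\<mu> a) u b (table \<omega>) t})"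
    unfolding bad_rounds using bad_round by (simp add: sum.distrib)
  also have "\<dots> \<le> 2"
  proof -
    have "2 \<le> Kmax M K"
      using two_le_Kmax[OF K_pos a b] gap by auto
    then show ?thesis
      using sum_prob_index_below_le_1[OF a, of T] sum_prob_index_above_le_1[OF a b gap T u] by simp
  qed
  finally show "expectation (\<lambda>\<omega>. bad_rounds (\<mu> a) u a b (table \<omega>) T) \<le> 2" .
qed

lemma expected_pulls_le:
  assumes a: "a \<in> A" and b: "b \<in> A" and gap: "\<mu> b < \<mu> a" and T: "1 \<le> T"
    and u: "u = (6 + 4 * sqrt 2) * ln T / (\<mu> a - \<mu> b)\<^sup>2"
  shows "expectation (\<lambda>\<omega>. pulls (table \<omega>) T b) \<le> u + 3"
proof -
  have u0: "0 \<le> u"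
    unfolding u using T by (intro divide_nonneg_nonneg mult_nonneg_nonneg) auto
  note bad = expected_bad_rounds_le_2[OF a b gap T u]
  have "expectation (\<lambda>\<omega>. pulls (table \<omega>) T b) \<le> expectation (\<lambda>\<omega>. (u + 1) + bad_rounds (\<mu> a) u a b (table \<omega>) T)"
  proof (rule integral_mono)
    show "integrable P (\<lambda>\<omega>. pulls (table \<omega>) T b)"
      using pulls_nonneg pulls_le by (intro integrable_const_bound[where B = T]) auto
    show "integrable P (\<lambda>\<omega>. (u + 1) + bad_rounds (\<mu> a) u a b (table \<omega>) T)"
      using bad(1) by simp
    show "pulls (table \<omega>) T b \<le> (u + 1) + bad_rounds (\<mu> a) u a b (table \<omega>) T" for \<omega>
      using pulls_le_bad_rounds[OF a b u0] by simp
  qed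
  also have "\<dots> \<le> u + 3"
    using bad by (simp add: prob_space)
  finally show ?thesis .
qed

lemma integrable_reward:
  assumes b: "b \<in> A" and t: "1 \<le> t"
  shows "integrable P (X b t)"
proof -
  have "finite_measure (F b)" and sets_Fb: "sets (F b) = sets borel"
    using F_prob b by (auto simp: prob_space_def)
  then have "integrable (F b) (\<lambda>x. x)"
  proof (intro finite_measure.integrable_const_bound[where B = 1])
    show "AE x in F b. norm x \<le> 1"
      using F_supp[rule_format, OF b] by (rule eventually_mono) auto
    show "(\<lambda>x. x) \<in> borel_measurable (F b)"
      by (subst measurable_cong_sets[OF sets_Fb refl]) measurable
  qed
  moreover have "distr P borel (X b t) = F b"
    using X_distr b t by blast
  ultimately have "integrable (distr P borel (X b t)) (\<lambda>x. x)"
    by simp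
  moreover have "X b t \<in> borel_measurable P"
    using X_meas b t by blast
  ultimately show ?thesis
    using integrable_distr by blast
qed

lemma expectation_reward:
  assumes b: "b \<in> A" and t: "1 \<le> t"
  shows "expectation (X b t) = \<mu> b"
proof -
  have "X b t \<in> borel_measurable P"
    using X_meas b t by blast
  then have "expectation (X b t) = integral\<^sup>L (distr P borel (X b t)) (\<lambda>x. x)"
    by (simp add: integral_distr)
  also have "distr P borel (X b t) = F b"
    using X_distr b t by blast
  finally show ?thesis
    using mu_def b by simp
qed

definition play_prob :: "nat \<Rightarrow> nat list \<Rightarrow> real" where
  "play_prob t b = prob {\<omega>\<in>space P. chosen (table \<omega>) t = b}"

lemma integrable_chosen_indicator: "integrable P (\<lambda>\<omega>. if chosen (table \<omega>) t = b then 1 else 0 :: real)"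
  by (rule integrable_if_one_zero) measurable

lemma expectation_chosen_indicator:
  "expectation (\<lambda>\<omega>. if chosen (table \<omega>) t = b then 1 else 0) = play_prob t b"
  unfolding play_prob_def by (rule integral_if_eq_measure)

lemma expectation_reward_if_chosen:
  assumes b: "b \<in> A"
  shows "integrable P (\<lambda>\<omega>. (if chosen (table \<omega>) (Suc t) = b then 1 else 0) * X b (Suc t) \<omega>)"
    and "expectation (\<lambda>\<omega>. (if chosen (table \<omega>) (Suc t) = b then 1 else 0) * X b (Suc t) \<omega>)
         = play_prob (Suc t) b * \<mu> b"
proof -
  define chosen_b where "chosen_b x = (if chosen x (Suc t) = b then 1 else 0 :: real)" for x
  define reward_b where "reward_b x = x (Suc t) b" for x :: reward_table
  have [measurable]: "(\<lambda>x. chosen x (Suc t)) \<in> measurable (table_space {1..t}) (count_space UNIV)"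
    by (rule measurable_chosen) auto
  have "chosen_b \<in> borel_measurable (table_space {1..t})"
    unfolding chosen_b_def by measurable
  moreover have "reward_b \<in> borel_measurable (table_space {Suc t})"
    unfolding reward_b_def using b by (intro measurable_table_entry) auto
  ultimately have indep: "indep_var borel (chosen_b \<circ> table_on {1..t}) borel (reward_b \<circ> table_on {Suc t})"
    by (rule indep_var_compose[OF indep_past_next_round])
  have chosen_b: "(chosen_b \<circ> table_on {1..t}) = (\<lambda>\<omega>. if chosen (table \<omega>) (Suc t) = b then 1 else 0)"
    unfolding chosen_b_def comp_def by (subst chosen_table_on) auto
  have reward_b: "(reward_b \<circ> table_on {Suc t}) = X b (Suc t)"
    unfolding reward_b_def comp_def using b by (simp add: table_on_apply)
  show "integrable P (\<lambda>\<omega>. (if chosen (table \<omega>) (Suc t) = b then 1 else 0) * X b (Suc t) \<omega>)"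
    using indep_var_integrable[OF indep] integrable_chosen_indicator integrable_reward[OF b]
    unfolding chosen_b reward_b by simp
  show "expectation (\<lambda>\<omega>. (if chosen (table \<omega>) (Suc t) = b then 1 else 0) * X b (Suc t) \<omega>)
      = play_prob (Suc t) b * \<mu> b"
    using indep_var_lebesgue_integral[OF indep] integrable_chosen_indicator integrable_reward[OF b]
      expectation_reward[OF b] expectation_chosen_indicator
    unfolding chosen_b reward_b by simp
qed

lemma played_reward_eq_sum:
  "X (chosen (table \<omega>) t) t \<omega> = (\<Sum>b\<in>A. (if chosen (table \<omega>) t = b then 1 else 0) * X b t \<omega>)"
proof -
  have "(\<Sum>b\<in>A. (if chosen (table \<omega>) t = b then 1 else 0) * X b t \<omega>)
      = (\<Sum>b\<in>A. if chosen (table \<omega>) t = b then X b t \<omega> else 0)"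
    by (rule sum.cong) auto
  also have "\<dots> = X (chosen (table \<omega>) t) t \<omega>"
    using sum.delta'[OF finite_A, of "chosen (table \<omega>) t" "\<lambda>b. X b t \<omega>"] chosen_in[of "table \<omega>" t] by simp
  finally show ?thesis by simp
qed

lemma expectation_played_reward:
  shows "integrable P (\<lambda>\<omega>. X (chosen (table \<omega>) (Suc t)) (Suc t) \<omega>)"
    and "expectation (\<lambda>\<omega>. X (chosen (table \<omega>) (Suc t)) (Suc t) \<omega>) = (\<Sum>b\<in>A. play_prob (Suc t) b * \<mu> b)"
  unfolding played_reward_eq_sum
  by (auto intro: expectation_reward_if_chosen(1) sum.cong
      simp: Bochner_Integration.integral_sum expectation_reward_if_chosen)

lemma sum_play_prob: "(\<Sum>b\<in>A. play_prob t b) = 1"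
proof -
  have "(\<Sum>b\<in>A. play_prob t b) = expectation (\<lambda>\<omega>. \<Sum>b\<in>A. if chosen (table \<omega>) t = b then 1 else 0)"
    by (simp add: Bochner_Integration.integral_sum integrable_chosen_indicator expectation_chosen_indicator)
  also have "\<dots> = expectation (\<lambda>\<omega>. 1)"
    using finite_A chosen_in by (intro Bochner_Integration.integral_cong) auto
  finally show ?thesis by (simp add: prob_space)
qed

lemma expected_pulls_eq: "expectation (\<lambda>\<omega>. pulls (table \<omega>) T b) = (\<Sum>t=1..T. play_prob t b)"
  unfolding pulls_def
  by (simp add: Bochner_Integration.integral_sum integrable_chosen_indicator expectation_chosen_indicator)

lemma expected_regret_eq:
  "expectation (\<lambda>\<omega>. real T * m - (\<Sum>t=1..T. X (played M K X \<omega> t) t \<omega>))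
     = (\<Sum>b\<in>A. (m - \<mu> b) * expectation (\<lambda>\<omega>. pulls (table \<omega>) T b))"
proof -
  have played: "integrable P (\<lambda>\<omega>. X (chosen (table \<omega>) t) t \<omega>)"
    "expectation (\<lambda>\<omega>. X (chosen (table \<omega>) t) t \<omega>) = (\<Sum>b\<in>A. play_prob t b * \<mu> b)"
    if "t \<in> {1..T}" for t
    using that expectation_played_reward[of "t - 1"] by auto
  have "expectation (\<lambda>\<omega>. real T * m - (\<Sum>t=1..T. X (played M K X \<omega> t) t \<omega>))
      = expectation (\<lambda>\<omega>. real T * m - (\<Sum>t=1..T. X (chosen (table \<omega>) t) t \<omega>))"
    by (simp add: played_eq_chosen)
  also have "\<dots> = real T * m - (\<Sum>t=1..T. expectation (\<lambda>\<omega>. X (chosen (table \<omega>) t) t \<omega>))"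
    by (subst Bochner_Integration.integral_diff)
       (auto intro!: Bochner_Integration.integrable_sum played simp: Bochner_Integration.integral_sum played prob_space)
  also have "\<dots> = real T * m - (\<Sum>t=1..T. \<Sum>b\<in>A. play_prob t b * \<mu> b)"
    using played by simp
  also have "\<dots> = (\<Sum>t=1..T. \<Sum>b\<in>A. play_prob t b * (m - \<mu> b))"
    by (simp add: algebra_simps sum_subtractf sum_distrib_left[symmetric] sum_play_prob)
  also have "\<dots> = (\<Sum>b\<in>A. (m - \<mu> b) * expectation (\<lambda>\<omega>. pulls (table \<omega>) T b))"
    unfolding expected_pulls_eq by (subst sum.swap) (simp add: sum_distrib_left mult.commute)
  finally show ?thesis .
qed

lemma gap_mul_expected_pulls_le:
  assumes a: "a \<in> A" and b: "b \<in> A" and gap: "\<mu> b < \<mu> a"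
  shows "(\<mu> a - \<mu> b) * expectation (\<lambda>\<omega>. pulls (table \<omega>) T b)
     \<le> 3 * (\<mu> a - \<mu> b) + (6 + 4 * sqrt 2) * ln (real T) / (\<mu> a - \<mu> b)"
proof (cases "T = 0")
  case True
  then show ?thesis using gap by (simp add: pulls_def)
next
  case False
  define \<Delta> where "\<Delta> = \<mu> a - \<mu> b"
  define u where "u = (6 + 4 * sqrt 2) * ln T / (\<mu> a - \<mu> b)\<^sup>2"
  have "\<Delta> * expectation (\<lambda>\<omega>. pulls (table \<omega>) T b) \<le> \<Delta> * (u + 3)"
    using expected_pulls_le[OF a b gap _ u_def] False gap unfolding \<Delta>_def by (intro mult_left_mono) auto
  also have "\<dots> = 3 * \<Delta> + (6 + 4 * sqrt 2) * ln (real T) / \<Delta>"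
    unfolding u_def \<Delta>_def[symmetric] using gap \<Delta>_def by (simp add: power2_eq_square field_simps)
  finally show ?thesis unfolding \<Delta>_def .
qed

end

theorem theorem1:
  fixes M :: nat and K :: "nat \<Rightarrow> nat"
    and P :: "'w measure"
    and X :: "nat list \<Rightarrow> nat \<Rightarrow> 'w \<Rightarrow> real"
    and F :: "nat list \<Rightarrow> real measure"
    and \<mu> :: "nat list \<Rightarrow> real"
    and T :: nat
  assumes M_pos: "M \<ge> 1"
    and K_pos: "\<forall>i<M. K i \<ge> 1"
    and P: "prob_space P"
    and F_prob: "\<forall>a\<in>arm_tuples M K. prob_space (F a) \<and> sets (F a) = sets borel"
    and F_supp: "\<forall>a\<in>arm_tuples M K. AE x in F a. 0 \<le> x \<and> x \<le> 1"
    and F_subg: "\<forall>a\<in>arm_tuples M K. subgaussian 1 (F a)"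
    and mu_def: "\<forall>a\<in>arm_tuples M K. \<mu> a = integral\<^sup>L (F a) (\<lambda>x. x)"
    and X_meas: "\<forall>a\<in>arm_tuples M K. \<forall>t\<ge>1. X a t \<in> borel_measurable P"
    and X_distr: "\<forall>a\<in>arm_tuples M K. \<forall>t\<ge>1. distr P borel (X a t) = F a"
    and X_indep: "prob_space.indep_vars P (\<lambda>_. PiM (arm_tuples M K) (\<lambda>_. borel))
                    (\<lambda>t \<omega>. restrict (\<lambda>a. X a t \<omega>) (arm_tuples M K)) {1..}"
  shows "(let A = arm_tuples M K; \<mu>star = Max (\<mu> ` A); \<Delta> = (\<lambda>a. \<mu>star - \<mu> a) in
          integral\<^sup>L P (\<lambda>\<omega>. real T * \<mu>star - (\<Sum>t=1..T. X (played M K X \<omega> t) t \<omega>))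
          \<le> 3 * (\<Sum>a\<in>A. \<Delta> a)
            + (\<Sum>a\<in>{a\<in>A. \<Delta> a > 0}. (6 + 4 * sqrt 2) * ln (real T) / \<Delta> a))"
proof -
  interpret mucb_bandit M K P X F \<mu>
    using K_pos P F_prob F_supp mu_def X_meas X_distr X_indep
    by (simp add: mucb_bandit_def mucb_bandit_axioms_def mucb_def)
  define \<mu>star where "\<mu>star = Max (\<mu> ` A)"
  have "\<mu>star \<in> \<mu> ` A"
    unfolding \<mu>star_def using finite_A A_nonempty by (intro Max_in) auto
  then obtain a where a: "a \<in> A" "\<mu> a = \<mu>star"
    by auto
  have below_max: "\<mu> b \<le> \<mu>star" if "b \<in> A" for b
    unfolding \<mu>star_def using finite_A that by simp
  have "(\<mu>star - \<mu> b) * expectation (\<lambda>\<omega>. pulls (table \<omega>) T b)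
      \<le> 3 * (\<mu>star - \<mu> b) + (if 0 < \<mu>star - \<mu> b then (6 + 4 * sqrt 2) * ln (real T) / (\<mu>star - \<mu> b) else 0)"
    if b: "b \<in> A" for b
    using gap_mul_expected_pulls_le[OF a(1) b, of T] a(2) below_max[OF b] by force
  then have "expectation (\<lambda>\<omega>. real T * \<mu>star - (\<Sum>t=1..T. X (played M K X \<omega> t) t \<omega>))
      \<le> (\<Sum>b\<in>A. 3 * (\<mu>star - \<mu> b) + (if 0 < \<mu>star - \<mu> b then (6 + 4 * sqrt 2) * ln (real T) / (\<mu>star - \<mu> b) else 0))"
    unfolding expected_regret_eq by (rule sum_mono)
  then show ?thesis
    unfolding Let_def \<mu>star_def[symmetric]
    by (simp add: sum.distrib sum_distrib_left sum.inter_filter finite_A)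
qed

end
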